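(* Let $N_S>0$, $M\ge 1$, $m\ge 1$ be integers/reals as indicated, and $0\le\kappa_T\le 1$. Consider the following entanglement-assisted discrimination task with equal prior probabilities. Source: for each of $m$ frequency slots $\ell=1,\dots,m$ and each of $M$ repetitions, prepare an independent signal–idler mode pair in the two-mode squeezed vacuum state $|\phi\rangle=\sum_{n=0}^\infty\sqrt{\frac{N_S^n}{(N_S+1)^{n+1}}}\,|n\rangle_S|n\rangle_I$. The idlers are kept noiselessly and losslessly. Hypotheses: if $m=1$ there are two hypotheses, under which every signal mode passes through a pure-loss channel $a\mapsto\sqrt{\kappa}\,a+\sqrt{1-\kappa}\,v$ ($v$ a vacuum mode) with $\kappa=\kappa_T$ (hypothesis "target") or $\kappa=\kappa_B=1$ (hypothesis "background"). If $m\ge 2$ there are $m$ hypotheses $h=1,\dots,m$; under hypothesis $h$ every signal mode of slot $h$ passes through the pure-loss channel of transmissivity $\kappa_T$ and every signal mode of every other slot passes through the identity channel (transmissivity $\kappa_B=1$); no thermal noise is added. Receiver: on each returned signal–idler pair $(a_S'',a_I'')$ apply a two-mode squeezing transformation of gain $G=1+N_S$, $a_S=\sqrt{G}\,a_S''-\sqrt{G-1}\,a_I''^{\dagger}$, $a_I=\sqrt{G}\,a_I''-\sqrt{G-1}\,a_S''^{\dagger}$; then perform photon counting on all $2mM$ output modes and decide by the maximum-likelihood rule, breaking ties uniformly at random. Then the error probability of this scheme is $$P_{E,m}=R_m\left[\frac{1}{1+N_S(1-\sqrt{\kappa_T})}\right]^{2M},$$ where $R_1=1/2$ and $R_m=(m-1)/m$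 for $m\ge 2$.
   Context: Modes are bosonic; $|n\rangle$ denotes the Fock (number) state. A pure-loss channel of transmissivity $\kappa$ acts on an annihilation operator $a$ as $a\mapsto\sqrt{\kappa}\,a+\sqrt{1-\kappa}\,v$ with $v$ in the vacuum state. Error probability is the average probability, under equal priors over the hypotheses, that the decision differs from the true hypothesis. *)

theory Defs
  imports "HOL-Analysis.Analysis"
begin

(* All quantum states are represented by their (real) amplitudes in the Fock
   (photon-number) basis. *)

definition tmsv_amp :: "real \<Rightarrow> nat \<Rightarrow> real" where
  "tmsv_amp NS n = sqrt (NS ^ n / (NS + 1) ^ (n + 1))"

text \<open>Pure-loss channel of transmissivity kappa, via its Stinespring dilation
  (beam splitter a -> sqrt kappa a + sqrt(1-kappa) v with vacuum v):
  amplitude of |k>_S |e>_E in the image of |n>_S |0>_v.\<close>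
definition loss_amp :: "real \<Rightarrow> nat \<Rightarrow> nat \<Rightarrow> nat \<Rightarrow> real" where
  "loss_amp \<kappa> n k e =
     (if k + e = n then sqrt (real (n choose k)) * sqrt \<kappa> ^ k * sqrt (1 - \<kappa>) ^ e else 0)"

text \<open>Fock matrix element <p,q| S |k,n> of the two-mode squeezing unitary
  S = exp(r (a b - a^+ b^+)), cosh r = sqrt G, sinh r = sqrt (G-1),
  i.e. S^+ a S = sqrt G a - sqrt(G-1) b^+, S^+ b S = sqrt G b - sqrt(G-1) a^+,
  written through the normal-ordered (disentangled) form
  S = exp(-t a^+ b^+) (cosh r)^(-(N_a+N_b+1)) exp(t a b), t = tanh r.\<close>
definition tms_elem :: "real \<Rightarrow> nat \<Rightarrow> nat \<Rightarrow> nat \<Rightarrow> nat \<Rightarrow> real" where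
  "tms_elem G p q k n =
     (let c = sqrt G; t = sqrt (G - 1) / sqrt G in
      (\<Sum>j\<le>min k n.
         if k \<le> p + j \<and> n \<le> q + j \<and> p + j - k = q + j - n then
           (let i = p + j - k in
              (- t) ^ i / fact i * t ^ j / fact j
              * sqrt (fact k / fact (k - j) * fact n / fact (n - j))
              * sqrt (fact (k - j + i) / fact (k - j) * fact (n - j + i) / fact (n - j))
              / c ^ (k + n - 2 * j + 1))
         else 0))"

text \<open>Amplitude of |p>_S |q>_I |e>_E after: TMSV source, pure loss kappa on the
  signal (environment E), then two-mode squeezing of gain G = 1 + N_S on (S,I).\<close>
definition out_amp :: "real \<Rightarrow> real \<Rightarrow> nat \<Rightarrow> nat \<Rightarrow> nat \<Rightarrow> real" where
  "out_amp NS \<kappa> p q e =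
     (\<Sum>\<^sub>\<infinity>(k, n)\<in>UNIV. tms_elem (1 + NS) p q k n * tmsv_amp NS n * loss_amp \<kappa> n k e)"

definition pair_prob :: "real \<Rightarrow> real \<Rightarrow> nat \<times> nat \<Rightarrow> real" where
  "pair_prob NS \<kappa> pq = (\<Sum>\<^sub>\<infinity>e\<in>UNIV. (out_amp NS \<kappa> (fst pq) (snd pq) e)\<^sup>2)"

definition num_hyp :: "nat \<Rightarrow> nat" where
  "num_hyp m = (if m = 1 then 2 else m)"

text \<open>Transmissivity of slot l (0-based) under hypothesis h (0-based):
  kappa_T on the slot equal to h, kappa_B = 1 elsewhere.  For m = 1, h = 0 is
  "target" and h = 1 is "background".\<close>
definition kap :: "real \<Rightarrow> nat \<Rightarrow> nat \<Rightarrow> real" where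
  "kap \<kappa>T h l = (if l = h then \<kappa>T else 1)"

definition outcomes :: "nat \<Rightarrow> nat \<Rightarrow> (nat \<Rightarrow> nat \<Rightarrow> nat \<times> nat) set" where
  "outcomes m M = {w. \<forall>l r. (m \<le> l \<or> M \<le> r) \<longrightarrow> w l r = (0, 0)}"

definition hyp_prob :: "real \<Rightarrow> real \<Rightarrow> nat \<Rightarrow> nat \<Rightarrow> nat \<Rightarrow> (nat \<Rightarrow> nat \<Rightarrow> nat \<times> nat) \<Rightarrow> real" where
  "hyp_prob NS \<kappa>T m M h w = (\<Prod>l<m. \<Prod>r<M. pair_prob NS (kap \<kappa>T h l) (w l r))"

definition ml_set :: "real \<Rightarrow> real \<Rightarrow> nat \<Rightarrow> nat \<Rightarrow> (nat \<Rightarrow> nat \<Rightarrow> nat \<times> nat) \<Rightarrow> nat set" where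
  "ml_set NS \<kappa>T m M w =
     {h. h < num_hyp m \<and> (\<forall>h'<num_hyp m. hyp_prob NS \<kappa>T m M h' w \<le> hyp_prob NS \<kappa>T m M h w)}"

definition decide_prob :: "real \<Rightarrow> real \<Rightarrow> nat \<Rightarrow> nat \<Rightarrow> (nat \<Rightarrow> nat \<Rightarrow> nat \<times> nat) \<Rightarrow> nat \<Rightarrow> real" where
  "decide_prob NS \<kappa>T m M w h =
     (if h \<in> ml_set NS \<kappa>T m M w then 1 / real (card (ml_set NS \<kappa>T m M w)) else 0)"

definition error_prob :: "real \<Rightarrow> real \<Rightarrow> nat \<Rightarrow> nat \<Rightarrow> real" where
  "error_prob NS \<kappa>T m M =
     (\<Sum>h<num_hyp m. (1 / real (num_hyp m)) *
        (\<Sum>\<^sub>\<infinity>w\<in>outcomes m M.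
           hyp_prob NS \<kappa>T m M h w * (1 - decide_prob NS \<kappa>T m M w h)))"

end

theory Submission
  imports Defs
begin

(* Under the identity channel the receiver's squeezer, having the same gain G = 1 + N_S as the
   source, exactly undoes the two-mode squeezed vacuum, so a background pair is always counted
   as (0, 0).  In Fock amplitudes the cancellation for a count (p, p) with p > 0 comes from
   summing a negative binomial series over the source photon number n, which leaves the
   binomial sum (1 - 1)^p.  Under loss kappa the (0, 0) amplitude is a geometric series with
   value 1 / (1 + N_S (1 - sqrt kappa)).  Hence any click reveals the target slot with
   certainty, and errors come only from the all-zero outcome, of probability
   (1 / (1 + N_S (1 - sqrt kappa_T)))^(2M) under every target hypothesis, where the ML rule
   errs with probability 1/2 (m = 1, background always gives no clicks) or (m - 1)/m
   (m >= 2, all hypotheses tie). *)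

lemma has_sum_sum:
  fixes f :: "'i \<Rightarrow> 'a \<Rightarrow> 'b::topological_comm_monoid_add"
  assumes "finite I" "\<And>i. i \<in> I \<Longrightarrow> (f i has_sum s i) A"
  shows "((\<lambda>x. \<Sum>i\<in>I. f i x) has_sum (\<Sum>i\<in>I. s i)) A"
  using assms by (induction I rule: finite_induct) (auto intro: has_sum_add)

lemma infsum_eq_single:
  fixes f :: "'a \<Rightarrow> 'b::{comm_monoid_add, t2_space}"
  assumes "a \<in> A" "\<And>x. x \<in> A \<Longrightarrow> x \<noteq> a \<Longrightarrow> f x = 0"
  shows "infsum f A = f a"
proof -
  have "infsum f A = infsum f {a}"
    by (rule infsum_cong_neutral) (use assms in auto)
  then show ?thesis by simp
qed

lemma infsum_diagonal:
  fixes f :: "'a \<times> 'a \<Rightarrow> 'b::{comm_monoid_add, t2_space}"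
  assumes "\<And>k n. k \<noteq> n \<Longrightarrow> f (k, n) = 0"
  shows "infsum f UNIV = infsum (\<lambda>n. f (n, n)) UNIV"
proof -
  have "infsum f UNIV = infsum f (range (\<lambda>n. (n, n)))"
    by (rule infsum_cong_neutral) (use assms in auto)
  also have "\<dots> = infsum (\<lambda>n. f (n, n)) UNIV"
    by (subst infsum_reindex) (auto simp: inj_on_def o_def)
  finally show ?thesis .
qed

lemma has_sum_choose_power:
  fixes x :: real
  assumes "0 \<le> x" "x < 1"
  shows "((\<lambda>n. real (n choose d) * x ^ (n - d)) has_sum 1 / (1 - x) ^ (d + 1)) UNIV"
proof -
  have coeff: "((- (real d + 1)) gchoose m) * (- x) ^ m = real ((m + d) choose d) * x ^ m" for m
  proof -
    have "((- (real d + 1)) gchoose m) = (- 1) ^ m * real ((d + m) choose m)"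
      by (subst gbinomial_minus) (simp add: add.commute binomial_gbinomial)
    then show ?thesis
      by (simp add: power_minus' binomial_symmetric[of d "d + m", simplified] add.commute)
  qed
  have "(\<lambda>m. ((- (real d + 1)) gchoose m) * (- x) ^ m) sums (1 + - x) powr (- (real d + 1))"
    by (rule gen_binomial_real) (use assms in auto)
  moreover have "(1 + - x) powr (- (real d + 1)) = 1 / (1 - x) ^ (d + 1)"
    using assms by (simp add: powr_minus_divide powr_realpow add.commute flip: of_nat_Suc)
  ultimately have "(\<lambda>m. real ((m + d) choose d) * x ^ (m + d - d)) sums (1 / (1 - x) ^ (d + 1))"
    unfolding coeff by simp
  moreover have "(\<Sum>i<d. real (i choose d) * x ^ (i - d)) = 0"
    by (simp add: binomial_eq_0)
  ultimately have "(\<lambda>n. real (n choose d) * x ^ (n - d)) sums (1 / (1 - x) ^ (d + 1))"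
    using sums_iff_shift[of "\<lambda>n. real (n choose d) * x ^ (n - d)" d] by simp
  then show ?thesis
    by (rule sums_nonneg_imp_has_sum) (use assms in auto)
qed

lemma tms_elem_eq_0: "p + n \<noteq> q + k \<Longrightarrow> tms_elem G p q k n = 0"
  unfolding tms_elem_def Let_def by (rule sum.neutral) auto

lemma sqrt_fact_ratio_square:
  assumes "b \<le> a"
  shows "sqrt (fact a / fact b * fact a / fact b) = real (a choose b) * fact (a - b)"
proof -
  have "fact a / fact b = real (a choose b) * fact (a - b)"
    using assms by (simp add: binomial_fact field_simps)
  moreover have "fact a / fact b * fact a / fact b = (fact a / fact b :: real) ^ 2"
    by (simp add: power2_eq_square)
  ultimately show ?thesis
    by simp
qed

lemma tms_elem_diagonal:
  assumes "G > 0"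
  defines "t \<equiv> sqrt (G - 1) / sqrt G" and "c \<equiv> sqrt G"
  shows "tms_elem G p p n n =
    (\<Sum>d\<le>p. (- 1) ^ (p - d) * real (p choose d) * real (n choose d)
                 * t ^ (p - d) * t ^ (n - d) / c ^ (2 * d + 1))"
    (is "_ = (\<Sum>d\<le>p. ?T d)")
proof -
  have summand: "(- t) ^ (p + j - n) / fact (p + j - n) * t ^ j / fact j
      * sqrt (fact n / fact (n - j) * fact n / fact (n - j))
      * sqrt (fact (n - j + (p + j - n)) / fact (n - j) * fact (n - j + (p + j - n)) / fact (n - j))
      / c ^ (n + n - 2 * j + 1) = ?T (n - j)"
    if "j \<le> n" "n \<le> p + j" for j
  proof -
    define d where "d = n - j"
    define e where "e = p - d"
    have idx: "n - j = d" "p + j - n = e" "p - d = e" "n - d = j"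
      "n + n - 2 * j + 1 = 2 * d + 1"
      using that by (auto simp: d_def e_def)
    have "sqrt (fact n / fact d * fact n / fact d) = real (n choose d) * fact j"
      using sqrt_fact_ratio_square[of d n] that by (simp add: d_def)
    moreover have "sqrt (fact (d + e) / fact d * fact (d + e) / fact d) = real (p choose d) * fact e"
      using sqrt_fact_ratio_square[of d "d + e"] that by (simp add: d_def e_def)
    ultimately show ?thesis
      unfolding idx by (simp add: power_minus' power_add)
  qed
  have "tms_elem G p p n n = (\<Sum>j\<le>n. if n - j \<le> p then ?T (n - j) else 0)"
    unfolding tms_elem_def Let_def min.idem t_def c_def
    by (intro sum.cong refl) (use summand in \<open>auto simp: t_def c_def\<close>)
  also have "\<dots> = (\<Sum>d\<le>n. if d \<le> p then ?T d else 0)"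
    by (rule sum.reindex_bij_witness[where i="\<lambda>d. n - d" and j="\<lambda>j. n - j"]) auto
  also have "\<dots> = (\<Sum>d\<in>{..n} \<inter> {..p}. ?T d)"
    by (subst sum.inter_restrict) auto
  also have "\<dots> = (\<Sum>d\<le>p. ?T d)"
    by (rule sum.mono_neutral_left) (auto simp: binomial_eq_0)
  finally show ?thesis .
qed

lemma tmsv_amp_eq:
  assumes "NS \<ge> 0"
  shows "tmsv_amp NS n = (sqrt NS / sqrt (1 + NS)) ^ n / sqrt (1 + NS)"
  using assms by (simp add: tmsv_amp_def real_sqrt_divide real_sqrt_power power_divide
      add.commute real_sqrt_mult)

lemma tms_elem_tmsv_amp_has_sum:
  assumes "NS \<ge> 0"
  shows "((\<lambda>n. tms_elem (1 + NS) p p n n * tmsv_amp NS n) has_sum 0 ^ p) UNIV"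
proof -
  define t where "t = sqrt NS / sqrt (1 + NS)"
  define c where "c = sqrt (1 + NS)"
  have cc: "c * c = 1 + NS" and tt: "t * t = NS / (1 + NS)"
    using assms by (simp_all add: c_def t_def flip: real_sqrt_divide)
  have diagonal: "tms_elem (1 + NS) p p n n = (\<Sum>d\<le>p. (- 1) ^ (p - d) * real (p choose d)
      * real (n choose d) * t ^ (p - d) * t ^ (n - d) / c ^ (2 * d + 1))" for n
    using tms_elem_diagonal[of "1 + NS" p n] assms by (simp add: t_def c_def)
  have tmsv: "tmsv_amp NS n = t ^ n / c" for n
    using tmsv_amp_eq[OF assms] by (simp add: t_def c_def)
  \<comment> \<open>This makes each negative binomial series over n collapse to its coefficient.\<close>
  have unit: "c * c * (1 - t * t) = 1"
    using assms by (simp add: cc tt field_simps)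
  let ?A = "\<lambda>d. (- 1) ^ (p - d) * real (p choose d) * t ^ p"
  have summand: "tms_elem (1 + NS) p p n n * tmsv_amp NS n =
      (\<Sum>d\<le>p. ?A d / (c * c) ^ (d + 1) * (real (n choose d) * (t * t) ^ (n - d)))" for n
    unfolding diagonal tmsv sum_distrib_right
  proof (intro sum.cong refl)
    fix d
    assume "d \<in> {..p}"
    then obtain e where p: "p = d + e" by (auto dest: le_Suc_ex)
    show "(- 1) ^ (p - d) * real (p choose d) * real (n choose d) * t ^ (p - d) * t ^ (n - d)
        / c ^ (2 * d + 1) * (t ^ n / c)
      = ?A d / (c * c) ^ (d + 1) * (real (n choose d) * (t * t) ^ (n - d))"
    proof (cases "d \<le> n")
      case True
      then obtain k where "n = d + k" by (auto dest: le_Suc_ex)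
      then show ?thesis
        unfolding p by (simp add: power_add power_mult_distrib mult_2 mult_2_right field_simps)
    qed (simp add: binomial_eq_0)
  qed
  have "((\<lambda>n. ?A d / (c * c) ^ (d + 1) * (real (n choose d) * (t * t) ^ (n - d))) has_sum ?A d) UNIV"
    for d
  proof -
    have "((\<lambda>n. real (n choose d) * (t * t) ^ (n - d)) has_sum 1 / (1 - t * t) ^ (d + 1)) UNIV"
      by (rule has_sum_choose_power) (use assms in \<open>auto simp: tt\<close>)
    note has_sum_cmult_right[OF this, of "?A d / (c * c) ^ (d + 1)"]
    moreover have "(c * c) ^ (d + 1) * (1 - t * t) ^ (d + 1) = 1"
      by (metis power_mult_distrib power_one unit)
    then have "?A d / (c * c) ^ (d + 1) * (1 / (1 - t * t) ^ (d + 1)) = ?A d"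
      by simp
    ultimately show ?thesis
      by simp
  qed
  then have series: "((\<lambda>n. tms_elem (1 + NS) p p n n * tmsv_amp NS n) has_sum (\<Sum>d\<le>p. ?A d)) UNIV"
    unfolding summand by (intro has_sum_sum) auto
  have "(\<Sum>d\<le>p. ?A d) = t ^ p * (\<Sum>d\<le>p. real (p choose d) * 1 ^ d * (- 1) ^ (p - d))"
    by (simp add: sum_distrib_left mult_ac)
  also have "\<dots> = t ^ p * (1 + - 1) ^ p"
    by (simp only: binomial_ring)
  also have "\<dots> = 0 ^ p"
    by (simp add: power_0_left)
  finally show ?thesis
    using series by simp
qed

lemma loss_amp_identity: "loss_amp 1 n k e = (if k = n \<and> e = 0 then 1 else 0)"
  by (cases e) (auto simp: loss_amp_def)

lemma loss_amp_diagonal: "loss_amp \<kappa> n n e = (if e = 0 then sqrt \<kappa> ^ n else 0)"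
  by (auto simp: loss_amp_def)

lemma out_amp_identity_channel:
  assumes "NS \<ge> 0"
  shows "out_amp NS 1 p q e = (if p = 0 \<and> q = 0 \<and> e = 0 then 1 else 0)"
proof -
  have "out_amp NS 1 p q e = (if e = 0 then \<Sum>\<^sub>\<infinity>n. tms_elem (1 + NS) p q n n * tmsv_amp NS n else 0)"
    unfolding out_amp_def by (subst infsum_diagonal) (auto simp: loss_amp_identity)
  also have "\<dots> = (if p = 0 \<and> q = 0 \<and> e = 0 then 1 else 0)"
  proof (cases "p = q")
    case True
    have "(\<Sum>\<^sub>\<infinity>n. tms_elem (1 + NS) p p n n * tmsv_amp NS n) = 0 ^ p"
      using tms_elem_tmsv_amp_has_sum[OF assms] by (rule infsumI)
    with True show ?thesis
      by (auto simp: power_0_left)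
  qed (simp add: tms_elem_eq_0)
  finally show ?thesis .
qed

lemma out_amp_vacuum:
  assumes "NS \<ge> 0" "0 \<le> \<kappa>" "\<kappa> \<le> 1"
  shows "out_amp NS \<kappa> 0 0 e = (if e = 0 then 1 / (1 + NS * (1 - sqrt \<kappa>)) else 0)"
proof -
  define t where "t = sqrt NS / sqrt (1 + NS)"
  define c where "c = sqrt (1 + NS)"
  define r where "r = t * t * sqrt \<kappa>"
  have cc: "c * c = 1 + NS" and r: "r = NS * sqrt \<kappa> / (1 + NS)"
    using assms by (simp_all add: c_def r_def t_def flip: real_sqrt_divide)
  have diagonal: "tms_elem (1 + NS) 0 0 n n = t ^ n / c" for n
    using tms_elem_diagonal[of "1 + NS" 0 n] assms by (simp add: t_def c_def)
  have tmsv: "tmsv_amp NS n = t ^ n / c" for n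
    using tmsv_amp_eq[OF assms(1)] by (simp add: t_def c_def)
  have vacuum: "tms_elem (1 + NS) 0 0 n n * tmsv_amp NS n * sqrt \<kappa> ^ n = r ^ n / (1 + NS)" for n
    unfolding diagonal tmsv by (simp add: r_def power_mult_distrib flip: cc)
  have "NS * sqrt \<kappa> \<le> NS"
    using assms by (simp add: mult_left_le)
  then have "0 \<le> r" "r < 1"
    using assms by (simp_all add: r field_simps)
  from has_sum_cmult_right[OF has_sum_choose_power[OF this, of 0], of "1 / (1 + NS)"]
  have "((\<lambda>n. r ^ n / (1 + NS)) has_sum 1 / (1 + NS * (1 - sqrt \<kappa>))) UNIV"
    using assms by (simp add: r field_simps)
  moreover have "out_amp NS \<kappa> 0 0 e = (if e = 0 then \<Sum>\<^sub>\<infinity>n. r ^ n / (1 + NS) else 0)"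
    unfolding out_amp_def
    by (subst infsum_diagonal) (auto simp: tms_elem_eq_0 loss_amp_diagonal vacuum)
  ultimately show ?thesis
    by (simp add: infsumI)
qed

lemma pair_prob_eq_out_amp_square:
  assumes "\<And>e. e \<noteq> 0 \<Longrightarrow> out_amp NS \<kappa> p q e = 0"
  shows "pair_prob NS \<kappa> (p, q) = (out_amp NS \<kappa> p q 0)\<^sup>2"
  unfolding pair_prob_def by (subst infsum_eq_single[of 0]) (auto simp: assms)

lemma pair_prob_identity_channel:
  assumes "NS \<ge> 0"
  shows "pair_prob NS 1 pq = (if pq = (0, 0) then 1 else 0)"
  using pair_prob_eq_out_amp_square[of NS 1 "fst pq" "snd pq"]
  by (cases pq) (simp add: out_amp_identity_channel[OF assms])

lemma pair_prob_vacuum: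
  assumes "NS \<ge> 0" "0 \<le> \<kappa>" "\<kappa> \<le> 1"
  shows "pair_prob NS \<kappa> (0, 0) = (1 / (1 + NS * (1 - sqrt \<kappa>)))\<^sup>2"
  using pair_prob_eq_out_amp_square[of NS \<kappa> 0 0] by (simp add: out_amp_vacuum[OF assms])

lemma pair_prob_nonneg: "pair_prob NS \<kappa> pq \<ge> 0"
  unfolding pair_prob_def by (rule infsum_nonneg) simp

lemma hyp_prob_nonneg: "hyp_prob NS \<kappa>T m M h w \<ge> 0"
  unfolding hyp_prob_def by (intro prod_nonneg) (auto intro: pair_prob_nonneg)

lemma hyp_prob_no_clicks:
  assumes "NS \<ge> 0" "0 \<le> \<kappa>T" "\<kappa>T \<le> 1"
  shows "hyp_prob NS \<kappa>T m M h (\<lambda>_ _. (0, 0)) =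
    (if h < m then (1 / (1 + NS * (1 - sqrt \<kappa>T))) ^ (2 * M) else 1)"
proof -
  have "(\<Prod>r<M. pair_prob NS (kap \<kappa>T h l) (0, 0)) =
      (if l = h then (1 / (1 + NS * (1 - sqrt \<kappa>T))) ^ (2 * M) else 1)" for l
    using assms by (simp add: kap_def pair_prob_vacuum pair_prob_identity_channel power_mult)
  then show ?thesis
    unfolding hyp_prob_def by (simp add: prod.delta)
qed

lemma hyp_prob_click_in_target_slot:
  assumes "NS \<ge> 0" "hyp_prob NS \<kappa>T m M h w \<noteq> 0" "l < m" "r < M" "w l r \<noteq> (0, 0)"
  shows "l = h"
proof (rule ccontr)
  assume "l \<noteq> h"
  then have "pair_prob NS (kap \<kappa>T h l) (w l r) = 0"
    using assms(1,5) by (simp add: kap_def pair_prob_identity_channel)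
  then show False
    using assms(2-4) unfolding hyp_prob_def by (auto simp: prod_zero_iff)
qed

lemma decide_prob_eq_1_if_others_impossible:
  assumes "h < num_hyp m" "hyp_prob NS \<kappa>T m M h w \<noteq> 0"
    and "\<And>h'. h' \<noteq> h \<Longrightarrow> hyp_prob NS \<kappa>T m M h' w = 0"
  shows "decide_prob NS \<kappa>T m M w h = 1"
proof -
  have "0 < hyp_prob NS \<kappa>T m M h w"
    using assms(2) hyp_prob_nonneg by (simp add: order_less_le)
  then have "ml_set NS \<kappa>T m M w = {h}"
    using assms unfolding ml_set_def by (force simp: hyp_prob_nonneg)
  then show ?thesis
    by (simp add: decide_prob_def)
qed

lemma error_summand_eq_0_if_click:
  assumes "NS \<ge> 0" "h < num_hyp m" "l < m" "r < M" "w l r \<noteq> (0, 0)"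
  shows "hyp_prob NS \<kappa>T m M h w * (1 - decide_prob NS \<kappa>T m M w h) = 0"
proof (cases "hyp_prob NS \<kappa>T m M h w = 0")
  case False
  have target: "l = h'" if "hyp_prob NS \<kappa>T m M h' w \<noteq> 0" for h'
    using hyp_prob_click_in_target_slot[of NS \<kappa>T m M h' w l r] assms that by blast
  then have "decide_prob NS \<kappa>T m M w h = 1"
    using decide_prob_eq_1_if_others_impossible[OF assms(2) False] False by metis
  then show ?thesis
    by simp
qed simp

lemma outcome_has_click:
  assumes "w \<in> outcomes m M" "w \<noteq> (\<lambda>_ _. (0, 0))"
  obtains l r where "l < m" "r < M" "w l r \<noteq> (0, 0)"
proof -
  have "\<exists>l r. l < m \<and> r < M \<and> w l r \<noteq> (0, 0)"
  proof (rule ccontr)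
    assume "\<not> ?thesis"
    then have "w l r = (0, 0)" for l r
      using assms(1) unfolding outcomes_def by (cases "l < m \<and> r < M") auto
    then show False
      using assms(2) by blast
  qed
  then show ?thesis
    using that by blast
qed

lemma error_prob_eq_no_clicks:
  assumes "NS \<ge> 0"
  shows "error_prob NS \<kappa>T m M = (\<Sum>h<num_hyp m. hyp_prob NS \<kappa>T m M h (\<lambda>_ _. (0, 0))
      * (1 - decide_prob NS \<kappa>T m M (\<lambda>_ _. (0, 0)) h)) / real (num_hyp m)"
proof -
  have "(\<Sum>\<^sub>\<infinity>w\<in>outcomes m M. hyp_prob NS \<kappa>T m M h w * (1 - decide_prob NS \<kappa>T m M w h))
      = hyp_prob NS \<kappa>T m M h (\<lambda>_ _. (0, 0)) * (1 - decide_prob NS \<kappa>T m M (\<lambda>_ _. (0, 0)) h)"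
    if "h < num_hyp m" for h
  proof (rule infsum_eq_single)
    fix w
    assume "w \<in> outcomes m M" "w \<noteq> (\<lambda>_ _. (0, 0))"
    then obtain l r where "l < m" "r < M" "w l r \<noteq> (0, 0)"
      by (rule outcome_has_click)
    then show "hyp_prob NS \<kappa>T m M h w * (1 - decide_prob NS \<kappa>T m M w h) = 0"
      using error_summand_eq_0_if_click[OF assms that] by blast
  qed (simp add: outcomes_def)
  then show ?thesis
    unfolding error_prob_def by (simp add: sum_divide_distrib)
qed

lemma no_clicks_error_single_slot:
  assumes "NS \<ge> 0" "0 \<le> \<kappa>T" "\<kappa>T \<le> 1"
  shows "(\<Sum>h<num_hyp 1. hyp_prob NS \<kappa>T 1 M h (\<lambda>_ _. (0, 0))
      * (1 - decide_prob NS \<kappa>T 1 M (\<lambda>_ _. (0, 0)) h))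
    = (1 / (1 + NS * (1 - sqrt \<kappa>T))) ^ (2 * M)"
proof -
  define Q where "Q = (1 / (1 + NS * (1 - sqrt \<kappa>T))) ^ (2 * M)"
  have "1 \<le> 1 + NS * (1 - sqrt \<kappa>T)"
    using assms by simp
  then have "Q \<le> 1"
    by (simp add: Q_def power_le_one_iff)
  have P: "hyp_prob NS \<kappa>T 1 M 0 (\<lambda>_ _. (0, 0)) = Q"
    "hyp_prob NS \<kappa>T 1 M 1 (\<lambda>_ _. (0, 0)) = 1"
    using hyp_prob_no_clicks[OF assms, of 1 M] by (simp_all add: Q_def)
  have hyps: "{..<num_hyp 1} = {0, 1 :: nat}"
    by (auto simp: num_hyp_def)
  have "ml_set NS \<kappa>T 1 M (\<lambda>_ _. (0, 0)) = {h \<in> {0, 1}. \<forall>h' \<in> {0, 1}.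
      hyp_prob NS \<kappa>T 1 M h' (\<lambda>_ _. (0, 0)) \<le> hyp_prob NS \<kappa>T 1 M h (\<lambda>_ _. (0, 0))}"
    unfolding ml_set_def hyps[symmetric] by auto
  \<comment> \<open>The simplifier writes the natural number 1 as Suc 0 here, hence both forms of P.\<close>
  also have "\<dots> = (if Q < 1 then {1} else {0, 1})"
    using \<open>Q \<le> 1\<close> by (auto simp: P P[unfolded One_nat_def])
  finally show ?thesis
    using \<open>Q \<le> 1\<close> unfolding hyps Q_def[symmetric]
    by (simp add: P P[unfolded One_nat_def] decide_prob_def)
qed

lemma no_clicks_error_multi_slot:
  assumes "NS \<ge> 0" "0 \<le> \<kappa>T" "\<kappa>T \<le> 1" "m \<ge> 2"
  shows "(\<Sum>h<num_hyp m. hyp_prob NS \<kappa>T m M h (\<lambda>_ _. (0, 0))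
      * (1 - decide_prob NS \<kappa>T m M (\<lambda>_ _. (0, 0)) h))
    = (real m - 1) * (1 / (1 + NS * (1 - sqrt \<kappa>T))) ^ (2 * M)"
proof -
  have num: "num_hyp m = m"
    using assms(4) by (simp add: num_hyp_def)
  have "ml_set NS \<kappa>T m M (\<lambda>_ _. (0, 0)) = {..<m}"
    unfolding ml_set_def num by (auto simp: hyp_prob_no_clicks[OF assms(1-3)])
  then have "(\<Sum>h<num_hyp m. hyp_prob NS \<kappa>T m M h (\<lambda>_ _. (0, 0))
      * (1 - decide_prob NS \<kappa>T m M (\<lambda>_ _. (0, 0)) h))
    = real m * ((1 / (1 + NS * (1 - sqrt \<kappa>T))) ^ (2 * M) * (1 - 1 / real m))"
    by (simp add: num hyp_prob_no_clicks[OF assms(1-3)] decide_prob_def)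
  also have "\<dots> = (real m - 1) * (1 / (1 + NS * (1 - sqrt \<kappa>T))) ^ (2 * M)"
    using assms(4) by (simp add: right_diff_distrib left_diff_distrib)
  finally show ?thesis .
qed

theorem mainTheorem1:
  fixes NS \<kappa>T :: real and m M :: nat
  assumes "NS > 0" and "M \<ge> 1" and "m \<ge> 1" and "0 \<le> \<kappa>T" and "\<kappa>T \<le> 1"
  shows "error_prob NS \<kappa>T m M =
           (if m = 1 then 1 / 2 else (real m - 1) / real m)
           * (1 / (1 + NS * (1 - sqrt \<kappa>T))) ^ (2 * M)"
proof -
  have NS: "NS \<ge> 0"
    using assms(1) by simp
  show ?thesis
  proof (cases "m = 1")
    case True
    then show ?thesis
      using no_clicks_error_single_slot[OF NS assms(4,5)]
      by (simp add: error_prob_eq_no_clicks[OF NS] num_hyp_def)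
  next
    case False
    then have "m \<ge> 2"
      using assms(3) by simp
    then show ?thesis
      using False no_clicks_error_multi_slot[OF NS assms(4,5) \<open>m \<ge> 2\<close>]
      by (simp add: error_prob_eq_no_clicks[OF NS] num_hyp_def)
  qed
qed

end
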